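(* Let $n$ be odd, $M$ an $n\times n$ HW-matrix and $S\in\mathcal P_n$. (1) If $S$ is an almost spin$^c$ set for $M$, then $|S|\equiv\frac{n-1}{2}\pmod 2$. (2) If $S$ is an almost spin$^c$ set for $M$, then $S$ is a spin$^c$ set for $M$.
   Context: $\mathcal S=\{0,1,2,3\}$ is the Klein four-group ($\mathbb Z_2$-vector space) with $x+x=0$, $1+2=3$, $1+3=2$, $2+3=1$. $\mathcal P_n$ is the power set of $\{1,\dots,n\}$ as a $\mathbb Z_2$-algebra (addition = symmetric difference, product = intersection); $|U|_2=|U|\bmod 2$. For $M\in\mathcal S^{n\times n}$ and $U\in\mathcal P_n$, $J_M(U)=\{j:\sum_{i\in U}M_{ij}=1\}$. $M$ is distinguished if it has $1$ on the diagonal and $2$ or $3$ off the diagonal; $M$ is an HW-matrix if it is distinguished, every column sum is $0$, and $J_M(U)\neq\emptyset$ for every $U\ne\emptyset,\{1,\dots,n\}$. $S\in\mathcal P_n$ is a spin$^c$ set for $M$ if $|(J_M(U)+U)\cap S|_2=\binom{|U|}{2}\bmod2$ for every $U\in\mathcal P_n$; it is an almost spin$^c$ set if this holds for every $U\subseteq\{1,\dots,n-1\}$. *)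

theory Defs
  imports Main
begin

text \<open>The Klein four-group S = {0,1,2,3}, encoded as naturals 0..3 with the bit
  representation x = 2*b2 + b1; addition is bitwise xor (so 1+2=3, 1+3=2, 2+3=1, x+x=0).
  Matrices are functions nat => nat => nat with indices in {1..n}.\<close>

definition klein_add :: "nat \<Rightarrow> nat \<Rightarrow> nat" where
  "klein_add x y = (x mod 2 + y mod 2) mod 2 + 2 * ((x div 2 + y div 2) mod 2)"

definition klein_sum :: "('i \<Rightarrow> nat) \<Rightarrow> 'i set \<Rightarrow> nat" where
  "klein_sum f U = Finite_Set.fold (\<lambda>i acc. klein_add (f i) acc) 0 U"

definition is_klein_matrix :: "nat \<Rightarrow> (nat \<Rightarrow> nat \<Rightarrow> nat) \<Rightarrow> bool" where
  "is_klein_matrix n M \<longleftrightarrow> (\<forall>i\<in>{1..n}. \<forall>j\<in>{1..n}. M i j \<in> {0,1,2,3})"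

definition J_M :: "nat \<Rightarrow> (nat \<Rightarrow> nat \<Rightarrow> nat) \<Rightarrow> nat set \<Rightarrow> nat set" where
  "J_M n M U = {j\<in>{1..n}. klein_sum (\<lambda>i. M i j) U = 1}"

definition distinguished :: "nat \<Rightarrow> (nat \<Rightarrow> nat \<Rightarrow> nat) \<Rightarrow> bool" where
  "distinguished n M \<longleftrightarrow> is_klein_matrix n M \<and>
     (\<forall>i\<in>{1..n}. M i i = 1) \<and>
     (\<forall>i\<in>{1..n}. \<forall>j\<in>{1..n}. i \<noteq> j \<longrightarrow> M i j \<in> {2,3})"

definition HW_matrix :: "nat \<Rightarrow> (nat \<Rightarrow> nat \<Rightarrow> nat) \<Rightarrow> bool" where
  "HW_matrix n M \<longleftrightarrow> distinguished n M \<and>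
     (\<forall>j\<in>{1..n}. klein_sum (\<lambda>i. M i j) {1..n} = 0) \<and>
     (\<forall>U. U \<subseteq> {1..n} \<longrightarrow> U \<noteq> {} \<longrightarrow> U \<noteq> {1..n} \<longrightarrow> J_M n M U \<noteq> {})"

text \<open>Symmetric difference (addition in P_n).\<close>
definition symdiff :: "'a set \<Rightarrow> 'a set \<Rightarrow> 'a set" where
  "symdiff A B = (A - B) \<union> (B - A)"

definition spinc_cond :: "nat \<Rightarrow> (nat \<Rightarrow> nat \<Rightarrow> nat) \<Rightarrow> nat set \<Rightarrow> nat set \<Rightarrow> bool" where
  "spinc_cond n M S U \<longleftrightarrow>
     card (symdiff (J_M n M U) U \<inter> S) mod 2 = (card U choose 2) mod 2"

definition spinc_set :: "nat \<Rightarrow> (nat \<Rightarrow> nat \<Rightarrow> nat) \<Rightarrow> nat set \<Rightarrow> bool" where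
  "spinc_set n M S \<longleftrightarrow> S \<subseteq> {1..n} \<and> (\<forall>U. U \<subseteq> {1..n} \<longrightarrow> spinc_cond n M S U)"

definition almost_spinc_set :: "nat \<Rightarrow> (nat \<Rightarrow> nat \<Rightarrow> nat) \<Rightarrow> nat set \<Rightarrow> bool" where
  "almost_spinc_set n M S \<longleftrightarrow> S \<subseteq> {1..n} \<and> (\<forall>U. U \<subseteq> {1..n-1} \<longrightarrow> spinc_cond n M S U)"

end

theory Submission
  imports Defs
begin

text \<open>Read each entry of the Klein four-group as a pair of bits. For a distinguished matrix the
  high bit of the j-th column sum over U is the parity of card (U - {j}), so
  j \<in> J(U) iff the low bits of column j sum to an odd number over U and card (U - {j}) is even.
  Since all column sums vanish and n - 1 is even, both conditions are unchanged when U is replaced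
  by its complement: J(U) = J({1..n} - U). Hence J({1..n-1}) = J({n}) = {n}, and the spin^c
  condition for U = {1..n-1} says card S = C(n-1, 2) = (n-1)/2 mod 2. For U containing n the
  complement U' lies in {1..n-1}; then (J(U) + U) \<inter> S is the complement of (J(U') + U') \<inter> S
  in S, and C(card U, 2) + C(card U', 2) = (n-1)/2 mod 2 turns the condition for U' into the one
  for U.\<close>

lemma even_klein_add_iff: "even (klein_add x y) \<longleftrightarrow> (even x \<longleftrightarrow> even y)"
  unfolding klein_add_def by (simp add: mod2_eq_if)

lemma even_klein_add_div_2_iff:
  "even (klein_add x y div 2) \<longleftrightarrow> (even (x div 2) \<longleftrightarrow> even (y div 2))"
  unfolding klein_add_def by (simp add: mod2_eq_if)

lemma klein_add_less_4: "klein_add x y < 4"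
  unfolding klein_add_def by (simp add: mod2_eq_if)

lemma klein_add_left_commute: "klein_add a (klein_add b c) = klein_add b (klein_add a c)"
  unfolding klein_add_def by (simp add: mod2_eq_if)

lemma klein_sum_empty [simp]: "klein_sum f {} = 0"
  unfolding klein_sum_def by simp

lemma klein_sum_insert:
  assumes "finite F" "x \<notin> F"
  shows "klein_sum f (insert x F) = klein_add (f x) (klein_sum f F)"
proof -
  interpret comp_fun_commute "\<lambda>i acc. klein_add (f i) acc"
    by standard (auto simp: fun_eq_iff klein_add_left_commute)
  show ?thesis
    unfolding klein_sum_def using assms by simp
qed

lemma klein_sum_less_4: "klein_sum f U < 4"
proof (cases "finite U")
  case True
  then show ?thesis
    by (induction U rule: finite_induct) (simp_all add: klein_sum_insert klein_add_less_4)
qed (simp add: klein_sum_def)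

lemma even_klein_sum_iff: "finite U \<Longrightarrow> even (klein_sum f U) \<longleftrightarrow> even (\<Sum>i\<in>U. f i)"
  by (induction U rule: finite_induct) (simp_all add: klein_sum_insert even_klein_add_iff)

lemma even_klein_sum_div_2_iff:
  "finite U \<Longrightarrow> even (klein_sum f U div 2) \<longleftrightarrow> even (\<Sum>i\<in>U. f i div 2)"
  by (induction U rule: finite_induct)
    (simp_all add: klein_sum_insert even_klein_add_div_2_iff)

lemma klein_sum_eq_1_iff:
  assumes "finite U"
  shows "klein_sum f U = 1 \<longleftrightarrow> odd (\<Sum>i\<in>U. f i) \<and> even (\<Sum>i\<in>U. f i div 2)"
proof -
  have "x = 1 \<longleftrightarrow> odd x \<and> even (x div 2)" if "x < 4" for x :: nat
  proof -
    have "x = 0 \<or> x = 1 \<or> x = 2 \<or> x = 3"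
      using that by arith
    then show ?thesis
      by (elim disjE) simp_all
  qed
  then show ?thesis
    using klein_sum_less_4 even_klein_sum_iff[OF assms] even_klein_sum_div_2_iff[OF assms] by metis
qed

lemma even_choose_2_iff: "even (m choose 2) \<longleftrightarrow> even (m div 2)"
proof (induction m)
  case 0
  then show ?case by (simp add: numeral_2_eq_2)
next
  case (Suc m)
  have "Suc m choose 2 = m + (m choose 2)"
    using binomial_Suc_Suc[of m 1] by (simp add: numeral_2_eq_2)
  then show ?case
    using Suc.IH by (cases "even m") (auto elim!: evenE oddE)
qed

lemma spinc_cond_iff:
  "spinc_cond n M S U \<longleftrightarrow> (even (card (symdiff (J_M n M U) U \<inter> S)) \<longleftrightarrow> even (card U div 2))"
  unfolding spinc_cond_def by (simp add: mod2_eq_if even_choose_2_iff)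

lemma div_2_add_complement_odd:
  fixes n k :: nat
  assumes "odd n" "k \<le> n"
  shows "(n - k) div 2 + k div 2 = (n - 1) div 2"
  using assms by (auto elim!: oddE)

lemma column_div_2_sum_distinguished:
  assumes "distinguished n M" "U \<subseteq> {1..n}" "j \<in> {1..n}"
  shows "(\<Sum>i\<in>U. M i j div 2) = card (U - {j})"
proof -
  have "M i j div 2 = (if i = j then 0 else 1)" if "i \<in> U" for i
  proof (cases "i = j")
    case False
    then have "M i j \<in> {2, 3}"
      using assms that unfolding distinguished_def by blast
    with False show ?thesis by auto
  qed (use assms that in \<open>auto simp: distinguished_def\<close>)
  then have "(\<Sum>i\<in>U. M i j div 2) = (\<Sum>i\<in>U. if i = j then 0 else 1)"
    by (rule sum.cong[OF refl])
  also have "\<dots> = card (U - {j})"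
    using finite_subset[OF assms(2)] by (simp add: sum.If_cases Diff_eq)
  finally show ?thesis .
qed

lemma J_M_distinguished:
  assumes "distinguished n M" "U \<subseteq> {1..n}"
  shows "J_M n M U = {j\<in>{1..n}. odd (\<Sum>i\<in>U. M i j) \<and> even (card (U - {j}))}"
  using klein_sum_eq_1_iff[OF finite_subset[OF assms(2) finite_atLeastAtMost]]
    column_div_2_sum_distinguished[OF assms]
  unfolding J_M_def by auto

definition column_sums_vanish :: "nat \<Rightarrow> (nat \<Rightarrow> nat \<Rightarrow> nat) \<Rightarrow> bool" where
  "column_sums_vanish n M \<longleftrightarrow> (\<forall>j\<in>{1..n}. klein_sum (\<lambda>i. M i j) {1..n} = 0)"

lemma J_M_complement:
  assumes "odd n" "distinguished n M"
    and column_sums: "column_sums_vanish n M"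
    and "U \<subseteq> {1..n}"
  shows "J_M n M ({1..n} - U) = J_M n M U"
proof -
  have bits_complement: "odd (\<Sum>i\<in>{1..n} - U. M i j) \<and> even (card ({1..n} - U - {j}))
      \<longleftrightarrow> odd (\<Sum>i\<in>U. M i j) \<and> even (card (U - {j}))" if j: "j \<in> {1..n}" for j
  proof -
    have "even (\<Sum>i\<in>{1..n}. M i j)"
      using column_sums j even_klein_sum_iff[OF finite_atLeastAtMost]
      unfolding column_sums_vanish_def by fastforce
    moreover have "(\<Sum>i\<in>{1..n}. M i j)
        = (\<Sum>i\<in>{1..n} - U. M i j) + (\<Sum>i\<in>U. M i j)"
      using sum.subset_diff[OF assms(4) finite_atLeastAtMost] by simp
    ultimately have "odd (\<Sum>i\<in>{1..n} - U. M i j) \<longleftrightarrow> odd (\<Sum>i\<in>U. M i j)"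
      by simp
    have "card ({1..n} - U - {j}) + card (U - {j}) = card ({1..n} - U - {j} \<union> (U - {j}))"
      using finite_subset[OF assms(4) finite_atLeastAtMost] by (intro card_Un_disjoint[symmetric]) auto
    also have "{1..n} - U - {j} \<union> (U - {j}) = {1..n} - {j}"
      using assms(4) by blast
    also have "card ({1..n} - {j}) = n - 1"
      using j by simp
    finally have "card ({1..n} - U - {j}) + card (U - {j}) = n - 1" .
    moreover have "even (n - 1)"
      using \<open>odd n\<close> by (auto elim!: oddE)
    ultimately have "even (card ({1..n} - U - {j})) \<longleftrightarrow> even (card (U - {j}))"
      by (metis even_add)
    with \<open>odd _ \<longleftrightarrow> odd _\<close> show ?thesis
      by blast
  qed
  show ?thesis
    unfolding J_M_distinguished[OF assms(2) Diff_subset] J_M_distinguished[OF assms(2) assms(4)]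
    by (rule Collect_cong) (use bits_complement in blast)
qed

lemma J_M_singleton:
  assumes "distinguished n M" "j \<in> {1..n}"
  shows "J_M n M {j} = {j}"
  using assms by (auto simp: J_M_distinguished distinguished_def insert_Diff_if)

lemma symdiff_Diff_right:
  assumes "J \<subseteq> N" "U \<subseteq> N"
  shows "symdiff J (N - U) = N - symdiff J U"
  using assms unfolding symdiff_def by blast

lemma atLeastAtMost_Diff_upper: "{1..n} - {n} = {1..n - 1 :: nat}"
  by auto

lemma even_card_if_spinc_cond_all_but_last:
  assumes "odd n" "distinguished n M"
    and column_sums: "column_sums_vanish n M"
    and "S \<subseteq> {1..n}" "spinc_cond n M S {1..n-1}"
  shows "even (card S) \<longleftrightarrow> even ((n - 1) div 2)"
proof -
  have n: "n \<in> {1..n}"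
    using \<open>odd n\<close> by (cases n) auto
  have "J_M n M {1..n-1} = {n}"
    unfolding atLeastAtMost_Diff_upper[symmetric]
    using J_M_complement[OF assms(1-3)] J_M_singleton[OF assms(2) n] n by simp
  moreover have "symdiff {n} {1..n-1} = {1..n}"
    using n unfolding symdiff_def by auto
  ultimately show ?thesis
    using assms(4,5) unfolding spinc_cond_iff by (simp add: Int_absorb1)
qed

lemma spinc_cond_complement:
  assumes "odd n" "distinguished n M"
    and column_sums: "column_sums_vanish n M"
    and "S \<subseteq> {1..n}" "U \<subseteq> {1..n}"
    and card_S: "even (card S) \<longleftrightarrow> even ((n - 1) div 2)"
    and "spinc_cond n M S U"
  shows "spinc_cond n M S ({1..n} - U)"
proof -
  define X where "X = symdiff (J_M n M U) U"
  have card_U: "card U \<le> n"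
    using card_mono[OF finite_atLeastAtMost assms(5)] by simp
  have "J_M n M U \<subseteq> {1..n}"
    unfolding J_M_def by blast
  then have "symdiff (J_M n M ({1..n} - U)) ({1..n} - U) = {1..n} - X"
    unfolding X_def J_M_complement[OF assms(1-3,5)] by (rule symdiff_Diff_right[OF _ assms(5)])
  then have "symdiff (J_M n M ({1..n} - U)) ({1..n} - U) \<inter> S = S - X"
    using assms(4) by blast
  moreover have "card S = card (S \<inter> X) + card (S - X)"
    using finite_subset[OF assms(4) finite_atLeastAtMost] by (rule card_Int_Diff)
  moreover have "even (card (S \<inter> X)) \<longleftrightarrow> even (card U div 2)"
    using \<open>spinc_cond n M S U\<close> unfolding spinc_cond_iff X_def by (simp add: Int_commute)
  moreover have "even ((n - card U) div 2) \<longleftrightarrow> (even ((n - 1) div 2) \<longleftrightarrow> even (card U div 2))"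
    unfolding div_2_add_complement_odd[OF assms(1) card_U, symmetric] by auto
  moreover have "card ({1..n} - U) = n - card U"
    using finite_subset[OF assms(5)] assms(5) by (simp add: card_Diff_subset)
  ultimately show ?thesis
    unfolding spinc_cond_iff using card_S by auto
qed

theorem mainTheorem8:
  fixes n :: nat and M :: "nat \<Rightarrow> nat \<Rightarrow> nat" and S :: "nat set"
  assumes "odd n" and "HW_matrix n M" and "S \<subseteq> {1..n}"
  shows "(almost_spinc_set n M S \<longrightarrow> card S mod 2 = ((n - 1) div 2) mod 2)
       \<and> (almost_spinc_set n M S \<longrightarrow> spinc_set n M S)"
proof (intro conjI impI)
  assume almost: "almost_spinc_set n M S"
  have M: "distinguished n M" "column_sums_vanish n M"
    using \<open>HW_matrix n M\<close> unfolding HW_matrix_def column_sums_vanish_def by blast+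
  have cond: "spinc_cond n M S U" if "U \<subseteq> {1..n-1}" for U
    using almost that unfolding almost_spinc_set_def by blast
  have card_S: "even (card S) \<longleftrightarrow> even ((n - 1) div 2)"
    using even_card_if_spinc_cond_all_but_last[OF assms(1) M assms(3) cond] by simp
  then show "card S mod 2 = (n - 1) div 2 mod 2"
    by (simp add: mod2_eq_if)
  have "spinc_cond n M S U" if U: "U \<subseteq> {1..n}" for U
  proof (cases "n \<in> U")
    case False
    with U have "U \<subseteq> {1..n-1}"
      unfolding atLeastAtMost_Diff_upper[symmetric] by blast
    then show ?thesis
      by (rule cond)
  next
    case True
    with U have "{1..n} - U \<subseteq> {1..n-1}"
      unfolding atLeastAtMost_Diff_upper[symmetric] by blast
    then have "spinc_cond n M S ({1..n} - ({1..n} - U))"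
      by (intro spinc_cond_complement[OF assms(1) M assms(3) _ card_S cond]) auto
    moreover have "{1..n} - ({1..n} - U) = U"
      using U by blast
    ultimately show ?thesis
      by simp
  qed
  with assms(3) show "spinc_set n M S"
    unfolding spinc_set_def by blast
qed

end
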